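(* Let $D\subset\mathbb{R}^d$ be a finite set, let $\epsilon>0$, and let $\tilde{\kappa}(x,y)=\exp(-\|x-y\|^2/\epsilon^2)$. Let $K\ge 2$ be an integer with $K\le |D|$. Let $S_{opt}\subseteq D$ with $|S_{opt}|=K$ minimize $\sum_{s_i,s_j\in S,\ i<j}\tilde{\kappa}(s_i,s_j)$ over all $K$-subsets $S\subseteq D$. Let $S_{int}\subseteq D$ with $|S_{int}|=K$ be a sample produced by the Interchange algorithm run until no replacement decreases the objective. This means: for every $s\in S_{int}$ and every $t\in D\setminus S_{int}$, the objective of $(S_{int}\setminus\{s\})\cup\{t\}$ is not smaller than that of $S_{int}$. Then $$\frac{1}{K(K-1)}\sum_{s_i,s_j\in S_{int},\ i<j}\tilde{\kappa}(s_i,s_j)\ \le\ \frac14+\frac{1}{K(K-1)}\sum_{s_i,s_j\in S_{opt},\ i<j}\tilde{\kappa}(s_i,s_j).$$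
   Context: The Interchange algorithm starts from a $K$-subset of $D$. It repeatedly replaces one element of the current subset by an element of $D$ outside it whenever this strictly decreases the objective $\sum_{s_i,s_j\in S,\ i<j}\tilde{\kappa}(s_i,s_j)$. *)

theory Defs
  imports "HOL-Analysis.Analysis"
begin

definition gkernel :: "real \<Rightarrow> real^'n \<Rightarrow> real^'n \<Rightarrow> real" where
  "gkernel eps x y = exp (- (norm (x - y))\<^sup>2 / eps\<^sup>2)"

text \<open>Sum of the (symmetric) kernel over unordered pairs {s_i, s_j}, i < j, of distinct
  elements of S, written as half of the sum over ordered pairs of distinct elements.\<close>
definition pair_obj :: "real \<Rightarrow> (real^'n) set \<Rightarrow> real" where
  "pair_obj eps S = (\<Sum>x \<in> S. \<Sum>y \<in> S - {x}. gkernel eps x y) / 2"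

end

theory Submission
  imports Defs
begin

text \<open>
  Write \<open>f\<close> for the pair objective and \<open>W(U,V)\<close> for the kernel summed over \<open>U \<times> V\<close>. Compare \<open>S = S_int\<close> with
  \<open>T = S_opt\<close> through \<open>A = S \<inter> T\<close>, \<open>B = S - T\<close>, \<open>C = T - S\<close>, where \<open>|B| = |C| = m\<close>.
  Summing the no-improvement inequalities over all swaps \<open>(s, t) \<in> B \<times> C\<close> and using that the
  Gaussian kernel is positive semidefinite, so that \<open>2 W(B,C) \<le> W(B,B) + W(C,C)\<close>, gives
  \<open>2m (f S - f T) \<le> 2m\<^sup>2 - W(B,B) - W(C,C) \<le> 2m (m - 1)\<close>. This is enough unless \<open>S\<close> and \<open>T\<close>
  are disjoint and \<open>K \<in> {2, 3}\<close>; disjointness sharpens the estimate to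
  \<open>(K + 1) (f S - f T) \<le> K (K - 1)\<close>, which settles \<open>K = 3\<close>, and for \<open>K = 2\<close> the triangle
  inequality gives \<open>\<kappa>(c\<^sub>1,c\<^sub>2) \<ge> \<kappa>(b\<^sub>1,b\<^sub>2)\<^sup>4\<close>, whence \<open>f S - f T \<le> p - p\<^sup>4 \<le> 1/2\<close>.

  Positive semidefiniteness comes from the factorisation
  \<open>\<kappa>(x,y) = exp(-\<bar>x\<bar>\<^sup>2/\<epsilon>\<^sup>2) exp(-\<bar>y\<bar>\<^sup>2/\<epsilon>\<^sup>2) exp(2 x\<bullet>y/\<epsilon>\<^sup>2)\<close>, whose last factor is a power series
  with nonnegative coefficients in the positive semidefinite kernels \<open>(x\<bullet>y)\<^sup>n\<close>.
\<close>

definition psd_kernel :: "'a set \<Rightarrow> ('a \<Rightarrow> 'a \<Rightarrow> real) \<Rightarrow> bool" where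
  "psd_kernel P G \<longleftrightarrow> (\<forall>c. 0 \<le> (\<Sum>x\<in>P. \<Sum>y\<in>P. c x * c y * G x y))"

lemma psd_kernel_const_one: "psd_kernel P (\<lambda>x y. 1)"
proof -
  have "(\<Sum>x\<in>P. \<Sum>y\<in>P. c x * c y * 1) = (\<Sum>x\<in>P. c x)\<^sup>2" for c :: "'a \<Rightarrow> real"
    by (simp add: power2_eq_square sum_product)
  then show ?thesis unfolding psd_kernel_def by simp
qed

lemma psd_kernel_rescale:
  assumes "psd_kernel P G"
  shows "psd_kernel P (\<lambda>x y. f x * f y * G x y)"
  unfolding psd_kernel_def
proof
  fix c :: "'a \<Rightarrow> real"
  have "0 \<le> (\<Sum>x\<in>P. \<Sum>y\<in>P. (c x * f x) * (c y * f y) * G x y)"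
    using assms unfolding psd_kernel_def by (rule allE)
  then show "0 \<le> (\<Sum>x\<in>P. \<Sum>y\<in>P. c x * c y * (f x * f y * G x y))"
    by (simp add: mult_ac)
qed

lemma psd_kernel_mult_inner:
  fixes G :: "'a::euclidean_space \<Rightarrow> 'a \<Rightarrow> real"
  assumes "psd_kernel P G"
  shows "psd_kernel P (\<lambda>x y. (x \<bullet> y) * G x y)"
  unfolding psd_kernel_def
proof
  fix c :: "'a \<Rightarrow> real"
  have "(\<Sum>x\<in>P. \<Sum>y\<in>P. c x * c y * ((x \<bullet> y) * G x y))
      = (\<Sum>x\<in>P. \<Sum>y\<in>P. \<Sum>b\<in>Basis. (c x * (x \<bullet> b)) * (c y * (y \<bullet> b)) * G x y)"
    by (intro sum.cong refl, subst euclidean_inner) (simp add: sum_distrib_left sum_distrib_right mult_ac)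
  also have "\<dots> = (\<Sum>x\<in>P. \<Sum>b\<in>Basis. \<Sum>y\<in>P. (c x * (x \<bullet> b)) * (c y * (y \<bullet> b)) * G x y)"
    by (intro sum.cong refl sum.swap)
  also have "\<dots> = (\<Sum>b\<in>Basis. \<Sum>x\<in>P. \<Sum>y\<in>P. (c x * (x \<bullet> b)) * (c y * (y \<bullet> b)) * G x y)"
    by (rule sum.swap)
  also have "\<dots> \<ge> 0"
  proof (rule sum_nonneg)
    fix b :: 'a
    show "0 \<le> (\<Sum>x\<in>P. \<Sum>y\<in>P. (c x * (x \<bullet> b)) * (c y * (y \<bullet> b)) * G x y)"
      using assms unfolding psd_kernel_def by (rule allE)
  qed
  finally show "0 \<le> (\<Sum>x\<in>P. \<Sum>y\<in>P. c x * c y * ((x \<bullet> y) * G x y))" by simp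
qed

lemma psd_kernel_inner_power:
  fixes P :: "'a::euclidean_space set"
  shows "psd_kernel P (\<lambda>x y. (x \<bullet> y) ^ k)"
proof (induction k)
  case 0
  then show ?case using psd_kernel_const_one by simp
next
  case (Suc k)
  then show ?case using psd_kernel_mult_inner by fastforce
qed

lemma psd_kernel_exp_inner:
  fixes P :: "'a::euclidean_space set"
  assumes "finite P" "s \<ge> 0"
  shows "psd_kernel P (\<lambda>x y. exp (s * (x \<bullet> y)))"
  unfolding psd_kernel_def
proof
  fix c :: "'a \<Rightarrow> real"
  let ?Q = "\<lambda>n. \<Sum>x\<in>P. \<Sum>y\<in>P. c x * c y * ((s * (x \<bullet> y)) ^ n / fact n)"
  have exp_sums: "(\<lambda>n. t ^ n / fact n) sums exp t" for t :: real
    using exp_converges[of t] by (simp add: divide_inverse mult.commute)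
  have "?Q sums (\<Sum>x\<in>P. \<Sum>y\<in>P. c x * c y * exp (s * (x \<bullet> y)))"
    by (intro sums_sum sums_mult exp_sums)
  moreover have "0 \<le> ?Q n" for n
  proof -
    have "?Q n = s ^ n / fact n * (\<Sum>x\<in>P. \<Sum>y\<in>P. c x * c y * (x \<bullet> y) ^ n)"
      by (simp add: sum_distrib_left power_mult_distrib algebra_simps)
    then show ?thesis
      using psd_kernel_inner_power[of P n] assms unfolding psd_kernel_def by simp
  qed
  ultimately show "0 \<le> (\<Sum>x\<in>P. \<Sum>y\<in>P. c x * c y * exp (s * (x \<bullet> y)))"
    using sums_le[of "\<lambda>_. 0" ?Q 0] sums_zero by blast
qed

lemma gkernel_factor:
  "gkernel eps x y = exp (- (x \<bullet> x) / eps\<^sup>2) * exp (- (y \<bullet> y) / eps\<^sup>2) * exp (2 / eps\<^sup>2 * (x \<bullet> y))"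
proof -
  have "- (norm (x - y))\<^sup>2 / eps\<^sup>2 = - (x \<bullet> x) / eps\<^sup>2 + - (y \<bullet> y) / eps\<^sup>2 + 2 / eps\<^sup>2 * (x \<bullet> y)"
    by (simp add: power2_norm_eq_inner inner_diff_left inner_diff_right inner_commute
        add_divide_distrib diff_divide_distrib)
  then show ?thesis unfolding gkernel_def by (simp only: exp_add)
qed

lemma psd_kernel_gkernel:
  assumes "finite P"
  shows "psd_kernel P (gkernel eps)"
proof -
  have factor: "gkernel eps = (\<lambda>x y. exp (- (x \<bullet> x) / eps\<^sup>2) * exp (- (y \<bullet> y) / eps\<^sup>2)
                               * exp (2 / eps\<^sup>2 * (x \<bullet> y)))"
    by (simp add: fun_eq_iff gkernel_factor)
  have "psd_kernel P \<dots>"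
    by (intro psd_kernel_rescale psd_kernel_exp_inner assms) simp
  then show ?thesis unfolding factor .
qed

lemma gkernel_self [simp]: "gkernel eps x x = 1"
  by (simp add: gkernel_def)

lemma gkernel_commute: "gkernel eps x y = gkernel eps y x"
  by (simp add: gkernel_def norm_minus_commute)

lemma gkernel_pos: "0 < gkernel eps x y"
  by (simp add: gkernel_def)

lemma gkernel_sq_mult_sq_le: "(gkernel eps a b)\<^sup>2 * (gkernel eps b c)\<^sup>2 \<le> gkernel eps a c"
proof -
  have "(norm (a - c))\<^sup>2 \<le> (norm (a - b) + norm (b - c))\<^sup>2"
    using norm_triangle_ineq[of "a - b" "b - c"] by (simp add: power_mono)
  also have "\<dots> \<le> 2 * (norm (a - b))\<^sup>2 + 2 * (norm (b - c))\<^sup>2"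
    using zero_le_square[of "norm (a - b) - norm (b - c)"] by (simp add: power2_eq_square algebra_simps)
  finally have "(norm (a - c))\<^sup>2 / eps\<^sup>2 \<le> (2 * (norm (a - b))\<^sup>2 + 2 * (norm (b - c))\<^sup>2) / eps\<^sup>2"
    by (rule divide_right_mono) simp
  then have "2 * (- (norm (a - b))\<^sup>2 / eps\<^sup>2) + 2 * (- (norm (b - c))\<^sup>2 / eps\<^sup>2)
               \<le> - (norm (a - c))\<^sup>2 / eps\<^sup>2"
    by (simp add: add_divide_distrib)
  then show ?thesis
    unfolding gkernel_def by (simp add: exp_add[symmetric] exp_of_nat_mult[symmetric, of 2] power2_eq_square)
qed

definition kernel_sum :: "real \<Rightarrow> (real^'n) set \<Rightarrow> (real^'n) set \<Rightarrow> real" where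
  "kernel_sum eps U V = (\<Sum>x\<in>U. \<Sum>y\<in>V. gkernel eps x y)"

lemma pair_obj_eq_kernel_sum: "finite S \<Longrightarrow> pair_obj eps S = (kernel_sum eps S S - card S) / 2"
  unfolding pair_obj_def kernel_sum_def by (simp add: sum_diff1 sum_subtractf)

lemma kernel_sum_commute: "kernel_sum eps U V = kernel_sum eps V U"
  unfolding kernel_sum_def by (subst sum.swap) (simp add: gkernel_commute)

lemma kernel_sum_Un_left:
  "finite U \<Longrightarrow> finite U' \<Longrightarrow> U \<inter> U' = {} \<Longrightarrow>
    kernel_sum eps (U \<union> U') V = kernel_sum eps U V + kernel_sum eps U' V"
  unfolding kernel_sum_def by (rule sum.union_disjoint)

lemma kernel_sum_Un_right:
  "finite V \<Longrightarrow> finite V' \<Longrightarrow> V \<inter> V' = {} \<Longrightarrow>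
    kernel_sum eps U (V \<union> V') = kernel_sum eps U V + kernel_sum eps U V'"
  unfolding kernel_sum_def by (simp add: sum.union_disjoint sum.distrib)

lemma kernel_sum_Int_Diff:
  assumes "finite S"
  shows "kernel_sum eps S S
           = kernel_sum eps (S \<inter> T) (S \<inter> T) + 2 * kernel_sum eps (S \<inter> T) (S - T) + kernel_sum eps (S - T) (S - T)"
proof -
  have parts: "S \<inter> T \<inter> (S - T) = {}" "finite (S \<inter> T)" "finite (S - T)"
    using assms by auto
  have "kernel_sum eps ((S \<inter> T) \<union> (S - T)) ((S \<inter> T) \<union> (S - T))
          = kernel_sum eps (S \<inter> T) (S \<inter> T) + kernel_sum eps (S \<inter> T) (S - T)
            + (kernel_sum eps (S - T) (S \<inter> T) + kernel_sum eps (S - T) (S - T))"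
    using parts by (simp add: kernel_sum_Un_left kernel_sum_Un_right)
  moreover have "(S \<inter> T) \<union> (S - T) = S" by blast
  ultimately show ?thesis by (simp add: kernel_sum_commute[of eps "S - T" "S \<inter> T"])
qed

lemma card_le_kernel_sum:
  assumes "finite U"
  shows "real (card U) \<le> kernel_sum eps U U"
proof -
  have "1 \<le> (\<Sum>y\<in>U. gkernel eps x y)" if "x \<in> U" for x
    using member_le_sum[of x U "gkernel eps x"] assms that by (simp add: less_imp_le[OF gkernel_pos])
  then have "(\<Sum>x\<in>U. 1) \<le> kernel_sum eps U U"
    unfolding kernel_sum_def by (rule sum_mono)
  then show ?thesis by simp
qed

lemma kernel_sum_cross_le:
  assumes "finite B" "finite C" "B \<inter> C = {}"
  shows "2 * kernel_sum eps B C \<le> kernel_sum eps B B + kernel_sum eps C C"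
proof -
  define c where "c x = (if x \<in> B then 1 else - 1 :: real)" for x
  have cB: "c x = 1" if "x \<in> B" for x using that by (simp add: c_def)
  have cC: "c x = - 1" if "x \<in> C" for x using that assms(3) by (auto simp: c_def)
  have blocks: "(\<Sum>x\<in>B \<union> C. \<Sum>y\<in>B \<union> C. F x y)
      = (\<Sum>x\<in>B. \<Sum>y\<in>B. F x y) + (\<Sum>x\<in>B. \<Sum>y\<in>C. F x y)
        + ((\<Sum>x\<in>C. \<Sum>y\<in>B. F x y) + (\<Sum>x\<in>C. \<Sum>y\<in>C. F x y))" for F :: "_ \<Rightarrow> _ \<Rightarrow> real"
    using assms by (simp add: sum.union_disjoint sum.distrib)
  have "0 \<le> (\<Sum>x\<in>B \<union> C. \<Sum>y\<in>B \<union> C. c x * c y * gkernel eps x y)"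
    using psd_kernel_gkernel[of "B \<union> C" eps] assms unfolding psd_kernel_def by blast
  also have "\<dots> = kernel_sum eps B B - kernel_sum eps B C - kernel_sum eps C B + kernel_sum eps C C"
    unfolding blocks kernel_sum_def by (simp add: cB cC sum_negf cong: sum.cong)
  finally show ?thesis by (simp add: kernel_sum_commute[of eps C B])
qed

lemma pair_obj_insert:
  assumes "finite R" "x \<notin> R"
  shows "pair_obj eps (insert x R) = pair_obj eps R + (\<Sum>y\<in>R. gkernel eps x y)"
proof -
  have "kernel_sum eps (insert x R) (insert x R) = kernel_sum eps R R + 2 * (\<Sum>y\<in>R. gkernel eps x y) + 1"
    using assms by (simp add: kernel_sum_def sum.distrib gkernel_commute[of eps _ x])
  then show ?thesis
    using assms by (simp add: pair_obj_eq_kernel_sum field_simps)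
qed

lemma pair_obj_doubleton: "x \<noteq> y \<Longrightarrow> pair_obj eps {x, y} = gkernel eps x y"
  using pair_obj_insert[of "{y}" x eps] by (simp add: pair_obj_def)

definition swap_stable :: "real \<Rightarrow> (real^'n) set \<Rightarrow> (real^'n) set \<Rightarrow> bool" where
  "swap_stable eps S D \<longleftrightarrow> (\<forall>s\<in>S. \<forall>t\<in>D - S. pair_obj eps S \<le> pair_obj eps ((S - {s}) \<union> {t}))"

lemma swap_stable_subset: "swap_stable eps S D \<Longrightarrow> T \<subseteq> D \<Longrightarrow> swap_stable eps S T"
  unfolding swap_stable_def by blast

lemma kernel_row_sum_le_of_swap:
  assumes "finite S" "s \<in> S" "t \<notin> S" "pair_obj eps S \<le> pair_obj eps ((S - {s}) \<union> {t})"
  shows "(\<Sum>y\<in>S. gkernel eps s y) - 1 \<le> (\<Sum>y\<in>S. gkernel eps t y) - gkernel eps t s"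
proof -
  define R where "R = S - {s}"
  have R: "finite R" "s \<notin> R" "t \<notin> R" "S = insert s R" "(S - {s}) \<union> {t} = insert t R"
    using assms by (auto simp: R_def)
  have "(\<Sum>y\<in>R. gkernel eps s y) \<le> (\<Sum>y\<in>R. gkernel eps t y)"
    using assms(4) by (simp add: R pair_obj_insert)
  moreover have "(\<Sum>y\<in>S. gkernel eps x y) = gkernel eps x s + (\<Sum>y\<in>R. gkernel eps x y)" for x
    using R by (simp add: gkernel_commute)
  ultimately show ?thesis by (simp add: gkernel_commute[of eps s t])
qed

lemma swap_stable_kernel_sum_le:
  assumes "finite S" "finite T" "swap_stable eps S T"
  shows "real (card (T - S)) * kernel_sum eps (S - T) S - real (card (S - T) * card (T - S))
           \<le> real (card (S - T)) * kernel_sum eps (T - S) S - kernel_sum eps (T - S) (S - T)"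
proof -
  have "(\<Sum>s\<in>S - T. \<Sum>t\<in>T - S. (\<Sum>y\<in>S. gkernel eps s y) - 1)
          \<le> (\<Sum>s\<in>S - T. \<Sum>t\<in>T - S. (\<Sum>y\<in>S. gkernel eps t y) - gkernel eps t s)"
    using assms kernel_row_sum_le_of_swap[OF assms(1)] unfolding swap_stable_def
    by (intro sum_mono) auto
  then show ?thesis
    unfolding kernel_sum_def
    by (simp add: sum_subtractf sum_distrib_left[symmetric] sum.swap[of _ "S - T" "T - S"])
       (simp add: algebra_simps)
qed

lemma pair_obj_diff_eq_kernel_sums:
  assumes "finite S" "finite T" "card S = card T"
  shows "2 * (pair_obj eps S - pair_obj eps T)
           = 2 * kernel_sum eps (S \<inter> T) (S - T) + kernel_sum eps (S - T) (S - T)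
             - 2 * kernel_sum eps (S \<inter> T) (T - S) - kernel_sum eps (T - S) (T - S)"
  using assms kernel_sum_Int_Diff[of S eps T] kernel_sum_Int_Diff[of T eps S]
  by (simp add: pair_obj_eq_kernel_sum Int_commute[of T S] field_simps)

lemma card_Diff_commute:
  assumes "finite S" "finite T" "card S = card T"
  shows "card (T - S) = card (S - T)"
  using assms card_Int_Diff[of S T] card_Int_Diff[of T S] by (simp add: Int_commute)

lemma swap_stable_gap_mult_le:
  assumes "finite S" "finite T" "card S = card T" "swap_stable eps S T"
  defines "m \<equiv> real (card (S - T))"
  shows "m * (2 * (pair_obj eps S - pair_obj eps T))
           \<le> 2 * m\<^sup>2 - kernel_sum eps (S - T) (S - T) - kernel_sum eps (T - S) (T - S)"
proof -
  define A B C where "A = S \<inter> T" and "B = S - T" and "C = T - S"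
  let ?W = "kernel_sum eps"
  have fin: "finite A" "finite B" "finite C" and SAB: "S = A \<union> B" and disj: "A \<inter> B = {}" "B \<inter> C = {}"
    using assms(1,2) by (auto simp: A_def B_def C_def)
  have cards: "real (card B) = m" "real (card C) = m"
    using card_Diff_commute[OF assms(1-3)] by (simp_all add: m_def B_def C_def)
  have "2 * (pair_obj eps S - pair_obj eps T) = 2 * ?W A B + ?W B B - 2 * ?W A C - ?W C C"
    using pair_obj_diff_eq_kernel_sums[OF assms(1-3), of eps] unfolding A_def B_def C_def .
  then have gap: "m * (2 * (pair_obj eps S - pair_obj eps T))
                    = 2 * (m * ?W A B) + m * ?W B B - 2 * (m * ?W A C) - m * ?W C C"
    by (simp only:) (simp add: algebra_simps)
  have "?W B S = ?W A B + ?W B B" "?W C S = ?W A C + ?W B C"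
    unfolding SAB using fin disj
    by (simp_all add: kernel_sum_Un_right kernel_sum_commute[of eps B A]
        kernel_sum_commute[of eps C A] kernel_sum_commute[of eps C B])
  moreover have "real (card C) * ?W B S - real (card B * card C) \<le> real (card B) * ?W C S - ?W C B"
    using swap_stable_kernel_sum_le[OF assms(1,2,4)] unfolding B_def C_def .
  ultimately have swap: "m * ?W A B + m * ?W B B - m * m \<le> m * ?W A C + m * ?W B C - ?W B C"
    using cards by (simp add: kernel_sum_commute[of eps C B] distrib_left)
  show ?thesis
  proof (cases "m = 0")
    case True
    then have "B = {}" "C = {}" using fin cards by auto
    then show ?thesis using True by (simp add: B_def C_def kernel_sum_def)
  next
    case False
    then have "(m - 1) * (2 * ?W B C) \<le> (m - 1) * (?W B B + ?W C C)"
      using kernel_sum_cross_le[OF fin(2,3) disj(2)] by (intro mult_left_mono) (auto simp: m_def)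
    then have "2 * (m * ?W B C) - 2 * ?W B C \<le> m * ?W B B + m * ?W C C - ?W B B - ?W C C"
      by (simp add: algebra_simps)
    then show ?thesis
      unfolding gap power2_eq_square B_def[symmetric] C_def[symmetric] using swap by linarith
  qed
qed

lemma swap_stable_gap_le_card_Diff:
  assumes "finite S" "finite T" "card S = card T" "swap_stable eps S T" "S \<noteq> T"
  shows "pair_obj eps S - pair_obj eps T \<le> real (card (S - T)) - 1"
proof -
  have "S - T \<noteq> {}"
    using assms card_subset_eq[of T S] by blast
  then have pos: "0 < real (card (S - T))"
    using assms(1) by (simp add: card_gt_0_iff)
  have "real (card (S - T)) * (2 * (pair_obj eps S - pair_obj eps T))
          \<le> real (card (S - T)) * (2 * (real (card (S - T)) - 1))"
    using swap_stable_gap_mult_le[OF assms(1-4)] card_Diff_commute[OF assms(1-3)]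
      card_le_kernel_sum[of "S - T" eps] card_le_kernel_sum[of "T - S" eps] assms(1,2)
    by (simp add: power2_eq_square algebra_simps)
  then show ?thesis using pos by simp
qed

lemma swap_stable_gap_le_two:
  assumes "card S = 2" "card T = 2" "S \<inter> T = {}" "swap_stable eps S T"
  shows "pair_obj eps S - pair_obj eps T \<le> 1 / 2"
proof -
  obtain b1 b2 where S: "S = {b1, b2}" "b1 \<noteq> b2" using assms(1) card_2_iff by metis
  obtain c1 c2 where T: "T = {c1, c2}" "c1 \<noteq> c2" using assms(2) card_2_iff by metis
  define p where "p = gkernel eps b1 b2"
  have swap_b2: "p \<le> gkernel eps b1 c" if "c \<in> T" for c
  proof -
    have "c \<notin> S" using that assms(3) by blast
    then have "pair_obj eps S \<le> pair_obj eps ((S - {b2}) \<union> {c})" and "(S - {b2}) \<union> {c} = {b1, c}"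
      using assms(4) that S unfolding swap_stable_def by auto
    moreover have "b1 \<noteq> c" using \<open>c \<notin> S\<close> S by blast
    ultimately show ?thesis using S by (simp add: p_def pair_obj_doubleton)
  qed
  have "0 \<le> p" by (simp add: p_def less_imp_le[OF gkernel_pos])
  have "p ^ 4 = p\<^sup>2 * p\<^sup>2" by (simp add: power4_eq_xxxx power2_eq_square)
  also have "\<dots> \<le> (gkernel eps c1 b1)\<^sup>2 * (gkernel eps b1 c2)\<^sup>2"
    using swap_b2[of c1] swap_b2[of c2] T \<open>0 \<le> p\<close>
    by (intro mult_mono power_mono) (auto simp: gkernel_commute[of eps c1 b1])
  also have "\<dots> \<le> gkernel eps c1 c2" by (rule gkernel_sq_mult_sq_le)
  finally have "p ^ 4 \<le> gkernel eps c1 c2" .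
  moreover have "p - p ^ 4 \<le> 1 / 2"
    using zero_le_square[of "p\<^sup>2 - 1/2"] zero_le_square[of "p - 1/2"]
    by (simp add: power2_eq_square power4_eq_xxxx algebra_simps)
  ultimately show ?thesis using S T by (simp add: p_def pair_obj_doubleton)
qed

lemma swap_stable_gap_le_disjoint:
  assumes "finite S" "finite T" "card S = K" "card T = K" "S \<inter> T = {}" "swap_stable eps S T"
  shows "pair_obj eps S - pair_obj eps T \<le> real K * (real K - 1) / 4"
proof (cases "K = 2")
  case True
  then show ?thesis using swap_stable_gap_le_two[of S T eps] assms by simp
next
  case False
  define g where "g = pair_obj eps S - pair_obj eps T"
  have diff: "S - T = S" "T - S = T" using assms(5) by auto
  have "2 * g = kernel_sum eps S S - kernel_sum eps T T"
    using assms by (simp add: g_def pair_obj_eq_kernel_sum field_simps)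
  then have gap: "(real K + 1) * g \<le> real K * (real K - 1)"
    using swap_stable_gap_mult_le[OF assms(1,2) _ assms(6), folded g_def] card_le_kernel_sum[OF assms(2), of eps] assms(3,4)
    by (simp add: diff power2_eq_square algebra_simps)
  \<comment> \<open>for \<open>K = 2\<close> this only gives \<open>g \<le> 2/3\<close>, hence the two-point lemma above\<close>
  have "4 * g \<le> real K * (real K - 1)"
  proof (cases "g \<le> 0")
    case True
    moreover have "0 \<le> real K * (real K - 1)" by (cases K) auto
    ultimately show ?thesis by (smt (verit))
  next
    case False
    then have pos: "0 < real K * (real K - 1)" using gap by (smt (verit) mult_pos_pos of_nat_0_le_iff)
    have "K \<ge> 2"
    proof (rule ccontr)
      assume "\<not> K \<ge> 2"
      then have "real K * (real K - 1) \<le> 0" by (intro mult_nonneg_nonpos) auto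
      with pos show False by linarith
    qed
    then have "K \<ge> 3" using \<open>K \<noteq> 2\<close> by linarith
    then have "4 * g \<le> (real K + 1) * g" using False by (intro mult_right_mono) auto
    then show ?thesis using gap by linarith
  qed
  then show ?thesis by (simp add: g_def)
qed

lemma swap_stable_gap_le:
  assumes "finite S" "finite T" "card S = K" "card T = K" "swap_stable eps S T"
  shows "pair_obj eps S - pair_obj eps T \<le> real K * (real K - 1) / 4"
proof -
  have "card (S - T) \<le> K" using assms(1,3) by (metis card_mono Diff_subset)
  then consider "S = T" | "S \<noteq> T" "card (S - T) < K" | "card (S - T) = K" by linarith
  then show ?thesis
  proof cases
    case 1
    then show ?thesis by (cases K) auto
  next
    case 2
    then have "pair_obj eps S - pair_obj eps T \<le> real K - 2"
      using swap_stable_gap_le_card_Diff[of S T eps] assms by simp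
    moreover have "real K - 2 \<le> real K * (real K - 1) / 4"
      using zero_le_square[of "2 * real K - 5"] by (simp add: power2_eq_square field_simps)
    ultimately show ?thesis by linarith
  next
    case 3
    then have "S \<inter> T = {}"
      using assms(1,3) card_Int_Diff[of S T] by simp
    then show ?thesis using swap_stable_gap_le_disjoint assms by blast
  qed
qed

theorem theorem3:
  fixes D S_opt S_int :: "(real^'n) set" and eps :: real and K :: nat
  assumes "finite D" and "eps > 0" and "K \<ge> 2" and "K \<le> card D"
    and "S_opt \<subseteq> D" and "card S_opt = K"
    and "\<forall>S. S \<subseteq> D \<and> card S = K \<longrightarrow> pair_obj eps S_opt \<le> pair_obj eps S"
    and "S_int \<subseteq> D" and "card S_int = K"
    and "\<forall>s \<in> S_int. \<forall>t \<in> D - S_int.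
           pair_obj eps S_int \<le> pair_obj eps ((S_int - {s}) \<union> {t})"
  shows "pair_obj eps S_int / (real K * (real K - 1))
           \<le> 1/4 + pair_obj eps S_opt / (real K * (real K - 1))"
proof -
  have "finite S_int" "finite S_opt"
    using assms(1,5,8) finite_subset by blast+
  moreover have "swap_stable eps S_int D"
    using assms(10) unfolding swap_stable_def .
  then have "swap_stable eps S_int S_opt"
    using assms(5) by (rule swap_stable_subset)
  ultimately have "pair_obj eps S_int - pair_obj eps S_opt \<le> real K * (real K - 1) / 4"
    using swap_stable_gap_le assms(6,9) by blast
  moreover have "0 < real K * (real K - 1)"
    using assms(3) by simp
  ultimately have "(pair_obj eps S_int - pair_obj eps S_opt) / (real K * (real K - 1)) \<le> 1/4"
    by (simp add: divide_le_eq)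
  moreover have "pair_obj eps S_int / (real K * (real K - 1))
      = (pair_obj eps S_int - pair_obj eps S_opt) / (real K * (real K - 1))
        + pair_obj eps S_opt / (real K * (real K - 1))"
    by (simp add: diff_divide_distrib)
  ultimately show ?thesis by linarith
qed

end
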